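(* Let $D$, $C$, $A$ be measurable spaces and $\mathcal{D}$ a probability distribution on $D$. Suppose $\mathrm{enc} : D \to C \times A$ and $\mathrm{dec} : C \times A \to D$ are mutually inverse measurable bijections such that the pushforward $\mathrm{enc}_*\mathcal{D}$ is a product distribution $\mathcal{C} \times \mathcal{A}$ on $C \times A$, and let the discriminative classifier be $\mathrm{cls} = \pi_A \circ \mathrm{enc} : D \to A$ (so $\mathrm{cls}_*\mathcal{D} = \mathcal{A}$ is a balanced attribute of $\mathcal{D}$). Let $\mathrm{put} : D \times A \to D$, $\mathrm{put}(d,a) = \mathrm{dec}(\pi_C(\mathrm{enc}(d)), a)$. Define the stochastic map $\mathrm{cls}^\dagger : A \to D$ sending $a$ to the distribution of $\mathrm{put}(d, a)$ where $d \sim \mathcal{D}$ is drawn independently. Then $\mathrm{cls}^\dagger$ is a Bayesian inversion of $\mathrm{cls}$ with respect to $\mathcal{D}$: the joint distribution of $(x, \mathrm{cls}(x))$ for $x \sim \mathcal{D}$ equals the joint distribution of $(x', a)$ where $a \sim \mathrm{cls}_*\mathcal{D}$ and $x' \sim \mathrm{cls}^\dagger(a)$.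
   Context: A Bayesian inversion of a stochastic map $f : X \to Y$ with respect to a distribution $\mathcal{P}$ on $X$ is a stochastic map $f^\dagger : Y \to X$ such that, in distribution, the pair $(x, f(x))$ with $x \sim \mathcal{P}$ coincides with the pair $(f^\dagger(y), y)$ with $y \sim f_*\mathcal{P}$. Here $\pi_C, \pi_A$ denote the product projections. *)

theory Defs
  imports "HOL-Probability.Probability"
begin

(* A stochastic map X -> Y is a measurable kernel f \<in> X ->M prob_algebra Y.
  The pushforward of a distribution P along f is bind P f. *)

definition stoch_pushforward :: "'x measure \<Rightarrow> ('x \<Rightarrow> 'y measure) \<Rightarrow> 'y measure" where
  "stoch_pushforward P f = bind P f"

definition joint_graph :: "'x measure \<Rightarrow> 'y measure \<Rightarrow> 'x measure \<Rightarrow> ('x \<Rightarrow> 'y measure) \<Rightarrow> ('x \<times> 'y) measure" where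
  "joint_graph X Y P f = bind P (\<lambda>x. distr (f x) (X \<Otimes>\<^sub>M Y) (\<lambda>y. (x, y)))"

definition joint_cograph :: "'x measure \<Rightarrow> 'y measure \<Rightarrow> 'y measure \<Rightarrow> ('y \<Rightarrow> 'x measure) \<Rightarrow> ('x \<times> 'y) measure" where
  "joint_cograph X Y Q g = bind Q (\<lambda>y. distr (g y) (X \<Otimes>\<^sub>M Y) (\<lambda>x. (x, y)))"

definition bayesian_inversion ::
  "'x measure \<Rightarrow> 'y measure \<Rightarrow> 'x measure \<Rightarrow> ('x \<Rightarrow> 'y measure) \<Rightarrow> ('y \<Rightarrow> 'x measure) \<Rightarrow> bool" where
  "bayesian_inversion X Y P f g \<longleftrightarrow>
     g \<in> Y \<rightarrow>\<^sub>M prob_algebra X \<and>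
     joint_graph X Y P f = joint_cograph X Y (stoch_pushforward P f) g"

end

theory Submission
  imports Defs
begin

text \<open>Both joint distributions are the image of \<open>PD\<close> under \<open>d \<mapsto> (d, cls d)\<close>. On the
  cograph side one draws \<open>a\<close> from \<open>PA\<close> and, independently, \<open>c = fst (enc d)\<close> with \<open>d\<close> from
  \<open>PD\<close>, which is distributed as \<open>PC\<close>; so \<open>(c, a)\<close> is a sample of \<open>PC \<Otimes> PA\<close>, which is the
  law of \<open>enc d\<close>, and \<open>(dec (c, a), a)\<close> is therefore distributed as \<open>(dec (enc d), cls d) = (d, cls d)\<close>.\<close>

lemma (in pair_prob_space) distr_pair_snd: "distr (M1 \<Otimes>\<^sub>M M2) M2 snd = M2"
proof (intro measure_eqI)
  fix A assume A: "A \<in> sets (distr (M1 \<Otimes>\<^sub>M M2) M2 snd)"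
  then have "emeasure (distr (M1 \<Otimes>\<^sub>M M2) M2 snd) A = emeasure (M1 \<Otimes>\<^sub>M M2) (space M1 \<times> A)"
    by (auto simp add: emeasure_distr space_pair_measure dest: sets.sets_into_space
             intro!: arg_cong2[where f=emeasure])
  with A show "emeasure (distr (M1 \<Otimes>\<^sub>M M2) M2 snd) A = emeasure M2 A"
    by (simp add: M2.emeasure_pair_measure_Times M1.emeasure_space_1)
qed simp

lemma (in pair_prob_space) distr_pair_measure_eq_bind:
  assumes h[measurable]: "case_prod h \<in> M1 \<Otimes>\<^sub>M M2 \<rightarrow>\<^sub>M K"
  shows "distr (M1 \<Otimes>\<^sub>M M2) K (case_prod h) = M2 \<bind> (\<lambda>y. distr M1 K (\<lambda>x. h x y))"
proof -
  note return_measurable[measurable]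
  have slice: "distr (M2 \<bind> (\<lambda>y. return (M1 \<Otimes>\<^sub>M M2) (x, y))) K (case_prod h)
      = M2 \<bind> (\<lambda>y. return K (h x y))" if x: "x \<in> space M1" for x
    using x by (subst distr_bind[where K="M1 \<Otimes>\<^sub>M M2"])
      (auto intro!: bind_cong simp: M2.not_empty distr_return space_pair_measure)
  have "distr (M1 \<Otimes>\<^sub>M M2) K (case_prod h) = M1 \<bind> (\<lambda>x. M2 \<bind> (\<lambda>y. return K (h x y)))"
    by (subst pair_measure_eq_bind, subst distr_bind[where K="M1 \<Otimes>\<^sub>M M2"])
      (auto intro!: bind_cong simp: slice M1.not_empty)
  also have "\<dots> = M2 \<bind> (\<lambda>y. M1 \<bind> (\<lambda>x. return K (h x y)))"
    by (rule bind_rotate) measurable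
  also have "\<dots> = M2 \<bind> (\<lambda>y. distr M1 K (\<lambda>x. h x y))"
    by (intro bind_cong refl bind_return_distr' M1.not_empty) measurable
  finally show ?thesis .
qed

lemma joint_graph_return:
  assumes "space P \<noteq> {}" and "sets P = sets X" and f[measurable]: "f \<in> X \<rightarrow>\<^sub>M Y"
  shows "joint_graph X Y P (\<lambda>x. return Y (f x)) = distr P (X \<Otimes>\<^sub>M Y) (\<lambda>x. (x, f x))"
proof -
  note [measurable_cong] = \<open>sets P = sets X\<close>
  have "joint_graph X Y P (\<lambda>x. return Y (f x)) = P \<bind> (\<lambda>x. return (X \<Otimes>\<^sub>M Y) (x, f x))"
    unfolding joint_graph_def using sets_eq_imp_space_eq[OF \<open>sets P = sets X\<close>]
    by (intro bind_cong refl) (auto simp: distr_return measurable_space[OF f])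
  also have "\<dots> = distr P (X \<Otimes>\<^sub>M Y) (\<lambda>x. (x, f x))"
    using \<open>space P \<noteq> {}\<close> by (intro bind_return_distr') measurable
  finally show ?thesis .
qed

lemma stoch_pushforward_return:
  "space P \<noteq> {} \<Longrightarrow> f \<in> P \<rightarrow>\<^sub>M Y \<Longrightarrow> stoch_pushforward P (\<lambda>x. return Y (f x)) = distr P Y f"
  unfolding stoch_pushforward_def by (rule bind_return_distr')

lemma joint_cograph_distr:
  assumes "sets Q = sets Y" and k[measurable]: "case_prod k \<in> Y \<Otimes>\<^sub>M P \<rightarrow>\<^sub>M X"
  shows "joint_cograph X Y Q (\<lambda>y. distr P X (k y)) = Q \<bind> (\<lambda>y. distr P (X \<Otimes>\<^sub>M Y) (\<lambda>x. (k y x, y)))"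
  unfolding joint_cograph_def using sets_eq_imp_space_eq[OF \<open>sets Q = sets Y\<close>]
  by (intro bind_cong refl) (simp add: distr_distr comp_def)

locale factorized_encoding = pair_prob_space PC PA + PD: prob_space PD
  for PC :: "'c measure" and PA :: "'a measure" and PD :: "'d measure" +
  fixes MD :: "'d measure" and MC :: "'c measure" and MA :: "'a measure"
    and enc :: "'d \<Rightarrow> 'c \<times> 'a" and dec :: "'c \<times> 'a \<Rightarrow> 'd"
  assumes sets_PD[measurable_cong]: "sets PD = sets MD"
    and sets_PC[measurable_cong]: "sets PC = sets MC"
    and sets_PA[measurable_cong]: "sets PA = sets MA"
    and enc_measurable[measurable]: "enc \<in> MD \<rightarrow>\<^sub>M MC \<Otimes>\<^sub>M MA"
    and dec_measurable[measurable]: "dec \<in> MC \<Otimes>\<^sub>M MA \<rightarrow>\<^sub>M MD"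
    and dec_enc: "\<And>d. d \<in> space MD \<Longrightarrow> dec (enc d) = d"
    and distr_enc: "distr PD (MC \<Otimes>\<^sub>M MA) enc = PC \<Otimes>\<^sub>M PA"
begin

definition cls :: "'d \<Rightarrow> 'a" where
  "cls = snd \<circ> enc"

definition put :: "'d \<Rightarrow> 'a \<Rightarrow> 'd" where
  "put d a = dec (fst (enc d), a)"

definition cls_dagger :: "'a \<Rightarrow> 'd measure" where
  "cls_dagger a = distr PD MD (\<lambda>d. put d a)"

lemma cls_measurable[measurable]: "cls \<in> MD \<rightarrow>\<^sub>M MA"
  unfolding cls_def by measurable

lemma put_measurable[measurable (raw)]:
  "f \<in> M \<rightarrow>\<^sub>M MD \<Longrightarrow> g \<in> M \<rightarrow>\<^sub>M MA \<Longrightarrow> (\<lambda>x. put (f x) (g x)) \<in> M \<rightarrow>\<^sub>M MD"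
  unfolding put_def by measurable

lemma distr_fst_enc: "distr PD PC (\<lambda>d. fst (enc d)) = PC"
proof -
  have "distr PD PC (\<lambda>d. fst (enc d)) = distr (distr PD (MC \<Otimes>\<^sub>M MA) enc) PC fst"
    by (simp add: distr_distr comp_def)
  also have "\<dots> = PC"
    by (simp add: distr_enc M2.distr_pair_fst)
  finally show ?thesis .
qed

lemma distr_cls: "distr PD MA cls = PA"
proof -
  have "distr PD MA cls = distr (distr PD (MC \<Otimes>\<^sub>M MA) enc) PA snd"
    by (simp add: distr_distr cls_def sets_PA cong: distr_cong)
  also have "\<dots> = PA"
    by (simp add: distr_enc distr_pair_snd)
  finally show ?thesis .
qed

lemma cls_dagger_measurable: "cls_dagger \<in> MA \<rightarrow>\<^sub>M prob_algebra MD"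
proof -
  have "(\<lambda>_. PD) \<in> MA \<rightarrow>\<^sub>M prob_algebra PD"
    by (intro measurable_const) (simp add: space_prob_algebra PD.prob_space_axioms)
  then show ?thesis
    unfolding cls_dagger_def[abs_def] by measurable
qed

lemma joint_cograph_cls_dagger:
  "joint_cograph MD MA PA cls_dagger = distr PD (MD \<Otimes>\<^sub>M MA) (\<lambda>d. (d, cls d))"
proof -
  let ?N = "MD \<Otimes>\<^sub>M MA"
  have "joint_cograph MD MA PA cls_dagger = PA \<bind> (\<lambda>a. distr PD ?N (\<lambda>d. (put d a, a)))"
    unfolding cls_dagger_def[abs_def] by (rule joint_cograph_distr) (simp_all add: sets_PA)
  also have "\<dots> = PA \<bind> (\<lambda>a. distr PC ?N (\<lambda>c. (dec (c, a), a)))"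
  proof (intro bind_cong refl)
    fix a assume "a \<in> space PA"
    then have [measurable]: "a \<in> space MA"
      using sets_eq_imp_space_eq[OF sets_PA] by simp
    show "distr PD ?N (\<lambda>d. (put d a, a)) = distr PC ?N (\<lambda>c. (dec (c, a), a))"
      by (subst distr_fst_enc[symmetric]) (simp add: distr_distr comp_def put_def)
  qed
  also have "\<dots> = distr (PC \<Otimes>\<^sub>M PA) ?N (\<lambda>(c, a). (dec (c, a), a))"
    by (rule distr_pair_measure_eq_bind[symmetric]) measurable
  also have "\<dots> = distr PD ?N (\<lambda>d. (dec (enc d), cls d))"
    by (simp add: distr_enc[symmetric] distr_distr comp_def cls_def split_beta')
  also have "\<dots> = distr PD ?N (\<lambda>d. (d, cls d))"
    by (intro distr_cong) (simp_all add: dec_enc sets_eq_imp_space_eq[OF sets_PD])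
  finally show ?thesis .
qed

lemma bayesian_inversion_cls: "bayesian_inversion MD MA PD (\<lambda>d. return MA (cls d)) cls_dagger"
  unfolding bayesian_inversion_def
  using cls_dagger_measurable joint_cograph_cls_dagger distr_cls
    joint_graph_return[OF PD.not_empty sets_PD cls_measurable]
    stoch_pushforward_return[OF PD.not_empty, of cls MA]
  by simp

end

theorem proposition3:
  fixes MD :: "'d measure" and MC :: "'c measure" and MA :: "'a measure"
    and PD :: "'d measure" and PC :: "'c measure" and PA :: "'a measure"
    and enc :: "'d \<Rightarrow> 'c \<times> 'a" and dec :: "'c \<times> 'a \<Rightarrow> 'd"
  assumes "prob_space PD" and "sets PD = sets MD"
    and "prob_space PC" and "sets PC = sets MC"
    and "prob_space PA" and "sets PA = sets MA"
    and "enc \<in> MD \<rightarrow>\<^sub>M MC \<Otimes>\<^sub>M MA"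
    and "dec \<in> MC \<Otimes>\<^sub>M MA \<rightarrow>\<^sub>M MD"
    and "\<forall>d\<in>space MD. dec (enc d) = d"
    and "\<forall>y\<in>space (MC \<Otimes>\<^sub>M MA). enc (dec y) = y"
    and "distr PD (MC \<Otimes>\<^sub>M MA) enc = PC \<Otimes>\<^sub>M PA"
  shows "bayesian_inversion MD MA PD
           (\<lambda>d. return MA (snd (enc d)))
           (\<lambda>a. distr PD MD (\<lambda>d. dec (fst (enc d), a)))"
proof -
  interpret factorized_encoding PC PA PD MD MC MA enc dec
    using assms by (intro factorized_encoding.intro pair_prob_space.intro pair_sigma_finite.intro
        factorized_encoding_axioms.intro) (auto intro: prob_space_imp_sigma_finite)
  show ?thesis
    using bayesian_inversion_cls unfolding cls_dagger_def[abs_def] cls_def put_def comp_def .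
qed

end
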